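(* Let $\mathcal{M}$ be a linkage $(n,d)$-tope field of type $v$ and thickness $k<n$, and let $i\in[d]$. Then the $i$-amalgamation of $\mathcal{M}$ is a linkage tope field of type $v+e_i$.
   Context: $L=\{\ell_1,\dots,\ell_n\}$, $R=\{r_1,\dots,r_d\}$; graphs are bipartite on $L\sqcup R$, identified with edge sets. For $v\in\mathbb{Z}_{>0}^d$ with $k=\sum v_i\le n$ and a $k$-subset $\sigma\subseteq L$, a tope of type $v$ on $\sigma$ is a graph with left degree vector the indicator vector $\mathbf{1}_\sigma$ and right degree vector $v$. An $(n,d)$-tope field of type $v$ is a family $(M_\sigma)$ with one tope of type $v$ on $\sigma$ for each $k$-subset $\sigma\subseteq L$. It is linkage if for every $(k+1)$-subset $\tau\subseteq L$ the union $C_\tau$ of the $M_\sigma$ with $\sigma\subset\tau$ is a tree on the node set $\tau\sqcup R$ (the linkage covector). For a linkage tope field, each $C_\tau$ contains a unique subgraph $G_\tau$ which is a tope of type $v+e_i$ on $\tau$; the family $(G_\tau)_{\tau}$, over all $(k+1)$-subsets $\tau$, is the $i$-amalgamation, a tope field of type $v+e_i$. *)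

theory Defs
  imports Main
begin

text \<open>Left nodes are l_1..l_n encoded as 0..<n, right nodes r_1..r_d as 0..<d.
  A bipartite graph on L \<sqcup> R is a set of edges (l, r) :: nat \<times> nat.\<close>

definition ldeg :: "(nat \<times> nat) set \<Rightarrow> nat \<Rightarrow> nat" where
  "ldeg G l = card {r. (l, r) \<in> G}"

definition rdeg :: "(nat \<times> nat) set \<Rightarrow> nat \<Rightarrow> nat" where
  "rdeg G r = card {l. (l, r) \<in> G}"

definition is_tope :: "nat \<Rightarrow> nat \<Rightarrow> (nat \<Rightarrow> nat) \<Rightarrow> nat set \<Rightarrow> (nat \<times> nat) set \<Rightarrow> bool" where
  "is_tope n d v \<sigma> G \<longleftrightarrow>
     G \<subseteq> {0..<n} \<times> {0..<d} \<and>
     (\<forall>l<n. ldeg G l = (if l \<in> \<sigma> then 1 else 0)) \<and>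
     (\<forall>r<d. rdeg G r = v r)"

definition valid_type :: "nat \<Rightarrow> nat \<Rightarrow> (nat \<Rightarrow> nat) \<Rightarrow> bool" where
  "valid_type n d v \<longleftrightarrow> (\<forall>j<d. 0 < v j) \<and> (\<Sum>j<d. v j) \<le> n"

definition thickness :: "nat \<Rightarrow> (nat \<Rightarrow> nat) \<Rightarrow> nat" where
  "thickness d v = (\<Sum>j<d. v j)"

definition tope_field :: "nat \<Rightarrow> nat \<Rightarrow> (nat \<Rightarrow> nat) \<Rightarrow> (nat set \<Rightarrow> (nat \<times> nat) set) \<Rightarrow> bool" where
  "tope_field n d v M \<longleftrightarrow> valid_type n d v \<and>
     (\<forall>\<sigma>. \<sigma> \<subseteq> {0..<n} \<and> card \<sigma> = thickness d v \<longrightarrow> is_tope n d v \<sigma> (M \<sigma>))"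

definition badj :: "(nat \<times> nat) set \<Rightarrow> nat + nat \<Rightarrow> nat + nat \<Rightarrow> bool" where
  "badj E x y \<longleftrightarrow> (\<exists>l r. (l, r) \<in> E \<and>
      ((x = Inl l \<and> y = Inr r) \<or> (x = Inr r \<and> y = Inl l)))"

definition is_tree_on :: "(nat + nat) set \<Rightarrow> (nat \<times> nat) set \<Rightarrow> bool" where
  "is_tree_on V E \<longleftrightarrow>
     V \<noteq> {} \<and>
     (\<forall>(l, r) \<in> E. Inl l \<in> V \<and> Inr r \<in> V) \<and>
     (\<forall>x\<in>V. \<forall>y\<in>V. (x, y) \<in> {(a, b). badj E a b}\<^sup>*) \<and>
     \<not> (\<exists>cs. 3 \<le> length cs \<and> distinct cs \<and> set cs \<subseteq> V \<and>
           (\<forall>j < length cs. badj E (cs ! j) (cs ! ((j + 1) mod length cs))))"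

definition linkage_covector :: "nat \<Rightarrow> nat \<Rightarrow> (nat \<Rightarrow> nat) \<Rightarrow> (nat set \<Rightarrow> (nat \<times> nat) set) \<Rightarrow> nat set \<Rightarrow> (nat \<times> nat) set" where
  "linkage_covector n d v M \<tau> = \<Union>{M \<sigma> | \<sigma>. \<sigma> \<subset> \<tau> \<and> card \<sigma> = thickness d v}"

definition linkage_tope_field :: "nat \<Rightarrow> nat \<Rightarrow> (nat \<Rightarrow> nat) \<Rightarrow> (nat set \<Rightarrow> (nat \<times> nat) set) \<Rightarrow> bool" where
  "linkage_tope_field n d v M \<longleftrightarrow> tope_field n d v M \<and>
     (\<forall>\<tau>. \<tau> \<subseteq> {0..<n} \<and> card \<tau> = thickness d v + 1 \<longrightarrow>
        is_tree_on (Inl ` \<tau> \<union> Inr ` {0..<d}) (linkage_covector n d v M \<tau>))"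

definition amalgamation :: "nat \<Rightarrow> nat \<Rightarrow> (nat \<Rightarrow> nat) \<Rightarrow> (nat set \<Rightarrow> (nat \<times> nat) set) \<Rightarrow> nat \<Rightarrow> nat set \<Rightarrow> (nat \<times> nat) set" where
  "amalgamation n d v M i \<tau> =
     (THE G. G \<subseteq> linkage_covector n d v M \<tau> \<and> is_tope n d (v(i := v i + 1)) \<tau> G)"

end

theory Submission
  imports Defs
begin

text \<open>
  Each covector \<open>C \<tau>\<close> is a tree, so it contains at most one tope of a given type on \<open>\<tau>\<close>:
  the edges of two different ones would alternate along an infinite non-backtracking walk.
  For an edge \<open>(e, i)\<close> of \<open>C \<tau>\<close>, adding it to \<open>M (\<tau> - {e})\<close> gives such a tope of type
  \<open>v + e\<^sub>i\<close>, so the amalgamation \<open>A \<tau>\<close> is well defined and equals it.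

  Now fix a \<open>(k + 2)\<close>-set \<open>\<rho>\<close>. The left neighbours \<open>N c\<close> of the right node \<open>i\<close> in
  \<open>A (\<rho> - {c})\<close> form \<open>(v i + 1)\<close>-sets, any two of which share the \<open>v i\<close> neighbours of \<open>i\<close>
  in \<open>M (\<rho> - {a, c})\<close>; hence they all lie in one \<open>(v i + 2)\<close>-set \<open>W\<close>, and
  \<open>H = insert (e, i) (A (\<rho> - {e}))\<close> does not depend on \<open>e \<in> W\<close>. This \<open>H\<close> is a tope of
  type \<open>v + 2e\<^sub>i\<close> inside the new covector \<open>D\<close> and contains all edges of \<open>D\<close> at \<open>i\<close>. A right
  node \<open>j\<close> has degree at most \<open>v j + 1\<close> in a covector of \<open>M\<close>, so \<open>D\<close> has at most one
  further edge at every \<open>j \<noteq> i\<close>, and thus fewer edges than vertices. A parity argument on the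
  symmetric difference of \<open>A (\<rho> - {c})\<close> and \<open>H\<close> joins every left node \<open>c\<close> to \<open>i\<close>, so \<open>D\<close>
  is connected, hence a tree.
\<close>

section \<open>Cycles and connectivity of finite graphs\<close>

definition has_cycle :: "('a \<Rightarrow> 'a \<Rightarrow> bool) \<Rightarrow> 'a set \<Rightarrow> bool" where
  "has_cycle R V \<longleftrightarrow> (\<exists>cs. 3 \<le> length cs \<and> distinct cs \<and> set cs \<subseteq> V \<and>
       (\<forall>j < length cs. R (cs ! j) (cs ! ((j + 1) mod length cs))))"

definition connected_on :: "('a \<Rightarrow> 'a \<Rightarrow> bool) \<Rightarrow> 'a set \<Rightarrow> bool" where
  "connected_on R V \<longleftrightarrow> (\<forall>x\<in>V. \<forall>y\<in>V. (x, y) \<in> {(a, b). R a b}\<^sup>*)"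

lemma cycle_of_closed_walk:
  assumes st: "s < t" "w s = w t" and inj: "inj_on w {s..<t}" and V: "\<And>m. w m \<in> V"
    and walk: "\<And>m. R (w m) (w (Suc m))"
    and no_return: "\<And>m. w (Suc (Suc m)) \<noteq> w m"
    and irrefl: "\<And>x. \<not> R x x"
  shows "has_cycle R V"
  unfolding has_cycle_def
proof (intro exI conjI)
  let ?cs = "map w [s..<t]"
  have "t \<noteq> Suc s" using walk[of s] st(2) irrefl by auto
  moreover have "t \<noteq> Suc (Suc s)" using no_return[of s] st(2) by auto
  ultimately show len: "3 \<le> length ?cs" using st by simp
  show "distinct ?cs" using inj by (simp add: distinct_map)
  show "set ?cs \<subseteq> V" using V by auto
  show "\<forall>j < length ?cs. R (?cs ! j) (?cs ! ((j + 1) mod length ?cs))"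
  proof (intro allI impI)
    fix j assume j: "j < length ?cs"
    show "R (?cs ! j) (?cs ! ((j + 1) mod length ?cs))"
    proof (cases "j + 1 < length ?cs")
      case True
      then have "?cs ! ((j + 1) mod length ?cs) = w (Suc (s + j))" by simp
      moreover have "?cs ! j = w (s + j)" using j by simp
      ultimately show ?thesis using walk[of "s + j"] by simp
    next
      case False
      then have "j + 1 = length ?cs" using j by simp
      then have wrap: "(j + 1) mod length ?cs = 0" and last: "Suc (s + j) = t" by auto
      have "?cs ! 0 = w t" using st by simp
      then have "?cs ! 0 = w (Suc (s + j))" using last by simp
      then show ?thesis using walk[of "s + j"] wrap j by simp
    qed
  qed
qed

lemma walk_in_finite_set_repeats:
  fixes w :: "nat \<Rightarrow> 'a"
  assumes "finite V" "\<And>m. w m \<in> V"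
  obtains s t where "s < t" "w s = w t" "inj_on w {s..<t}"
proof -
  have "\<not> inj w"
  proof
    assume "inj w"
    then have "infinite (range w)" by (simp add: finite_image_iff)
    moreover have "range w \<subseteq> V" using assms(2) by auto
    ultimately show False using finite_subset assms(1) by auto
  qed
  then obtain x y where "x \<noteq> y" "w x = w y" unfolding inj_def by blast
  then have ex: "\<exists>t. \<exists>s<t. w s = w t" by (metis linorder_neqE_nat)
  define t where "t = (LEAST t. \<exists>s<t. w s = w t)"
  obtain s where "s < t" "w s = w t"
    using LeastI_ex[OF ex] unfolding t_def by blast
  moreover have "inj_on w {s..<t}"
  proof (rule inj_onI)
    fix a b assume "a \<in> {s..<t}" "b \<in> {s..<t}" "w a = w b"
    moreover have "w a \<noteq> w b" if "a < b" "b < t" for a b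
      using not_less_Least[of b "\<lambda>t. \<exists>s<t. w s = w t"] that unfolding t_def by blast
    ultimately show "a = b" by (metis atLeastLessThan_iff linorder_neqE_nat)
  qed
  ultimately show thesis by (rule that)
qed

lemma non_backtracking_walk_has_cycle:
  assumes "finite V" "\<And>m. w m \<in> V"
    and "\<And>m. R (w m) (w (Suc m))" "\<And>m. w (Suc (Suc m)) \<noteq> w m" "\<And>x. \<not> R x x"
  shows "has_cycle R V"
proof -
  obtain s t where "s < t" "w s = w t" "inj_on w {s..<t}"
    using walk_in_finite_set_repeats[OF assms(1,2)] .
  then show ?thesis using cycle_of_closed_walk[of s t w V R] assms by blast
qed

lemma cycle_vertex_two_neighbours:
  assumes cyc: "3 \<le> length cs" "distinct cs" "\<forall>j < length cs. R (cs ! j) (cs ! ((j + 1) mod length cs))"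
    and symR: "\<And>a b. R a b \<Longrightarrow> R b a" and x: "x \<in> set cs"
  obtains y z where "y \<noteq> z" "R x y" "R x z"
proof -
  let ?L = "length cs"
  obtain p where p: "p < ?L" "cs ! p = x" using x by (metis in_set_conv_nth)
  define q where "q = (if p = 0 then ?L - 1 else p - 1)"
  have q: "q < ?L" "(q + 1) mod ?L = p" unfolding q_def using p cyc(1) by auto
  have "(p + 1) mod ?L \<noteq> q"
    unfolding q_def using p cyc(1) by (cases "p + 1 = ?L") auto
  moreover have "(p + 1) mod ?L < ?L" using cyc(1) by (intro mod_less_divisor) linarith
  ultimately have "cs ! ((p + 1) mod ?L) \<noteq> cs ! q"
    using nth_eq_iff_index_eq[OF cyc(2) _ q(1)] by simp
  moreover have "R x (cs ! ((p + 1) mod ?L))" using cyc(3) p by auto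
  moreover have "R (cs ! q) x" using cyc(3) q p by auto
  then have "R x (cs ! q)" by (rule symR)
  ultimately show thesis by (rule that)
qed

lemma has_cycle_card:
  assumes "has_cycle R V" "finite V"
  shows "3 \<le> card V"
proof -
  obtain cs where "3 \<le> length cs" "distinct cs" "set cs \<subseteq> V"
    using assms(1) unfolding has_cycle_def by blast
  then show ?thesis using card_mono[OF assms(2), of "set cs"] distinct_card[of cs] by simp
qed

lemma has_cycle_avoids_leaf:
  assumes "has_cycle R V" and symR: "\<And>a b. R a b \<Longrightarrow> R b a"
    and leaf: "\<And>y z. R x y \<Longrightarrow> R x z \<Longrightarrow> y = z"
  shows "has_cycle (\<lambda>a b. R a b \<and> a \<noteq> x \<and> b \<noteq> x) (V - {x})"
proof -
  obtain cs where cs: "3 \<le> length cs" "distinct cs" "set cs \<subseteq> V"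
      "\<forall>j < length cs. R (cs ! j) (cs ! ((j + 1) mod length cs))"
    using assms(1) unfolding has_cycle_def by blast
  have x: "x \<notin> set cs"
  proof
    assume "x \<in> set cs"
    then obtain y z where "y \<noteq> z" "R x y" "R x z"
      using cycle_vertex_two_neighbours[OF cs(1,2,4) symR] by blast
    then show False using leaf by blast
  qed
  have "(j + 1) mod length cs < length cs" for j
    using cs(1) by (intro mod_less_divisor) linarith
  then have "\<forall>j < length cs. cs ! j \<noteq> x \<and> cs ! ((j + 1) mod length cs) \<noteq> x"
    using x nth_mem by auto
  then show ?thesis
    unfolding has_cycle_def using cs x by (intro exI[of _ cs]) auto
qed

lemma connected_on_remove_leaf:
  assumes conn: "connected_on R V" and symR: "\<And>a b. R a b \<Longrightarrow> R b a"
    and leaf: "\<And>y. R x y \<longleftrightarrow> y = y0"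
  shows "connected_on (\<lambda>a b. R a b \<and> a \<noteq> x \<and> b \<noteq> x) (V - {x})"
  unfolding connected_on_def
proof (intro ballI)
  let ?R' = "{(a, b). R a b \<and> a \<noteq> x \<and> b \<noteq> x}"
  fix a b assume a: "a \<in> V - {x}" and b: "b \<in> V - {x}"
  have "(z \<noteq> x \<longrightarrow> (a, z) \<in> ?R'\<^sup>*) \<and> (z = x \<longrightarrow> (a, y0) \<in> ?R'\<^sup>*)"
    if "(a, z) \<in> {(a, b). R a b}\<^sup>*" for z
    using that
  proof (induction rule: rtrancl_induct)
    case base
    then show ?case using a by auto
  next
    case (step z z')
    then have Rzz': "R z z'" by simp
    show ?case
    proof (cases "z = x")
      case True
      then show ?thesis using step.IH Rzz' leaf by auto
    next
      case False
      have "z = y0" if "z' = x" using that symR[OF Rzz'] leaf by simp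
      moreover have "(a, z') \<in> ?R'\<^sup>*" if "z' \<noteq> x"
        using step.IH False that Rzz' by (simp add: rtrancl.rtrancl_into_rtrancl)
      ultimately show ?thesis using step.IH False by auto
    qed
  qed
  then show "(a, b) \<in> ?R'\<^sup>*" using conn a b unfolding connected_on_def by auto
qed

lemma card_rel_remove_leaf:
  assumes fin: "finite {(a, b). R a b}" and symR: "\<And>a b. R a b \<Longrightarrow> R b a"
    and leaf: "\<And>y. R x y \<longleftrightarrow> y = y0" and "y0 \<noteq> x"
  shows "card {(a, b). R a b} = card {(a, b). R a b \<and> a \<noteq> x \<and> b \<noteq> x} + 2"
proof -
  let ?R' = "{(a, b). R a b \<and> a \<noteq> x \<and> b \<noteq> x}"
  have "{(a, b). R a b} = ?R' \<union> {(x, y0), (y0, x)}"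
    using leaf symR by blast
  moreover have "finite ?R'" using fin by (rule rev_finite_subset) auto
  ultimately show ?thesis using \<open>y0 \<noteq> x\<close> by (simp add: card_Un_disjoint)
qed

lemma card_rel_eq_sum_degrees:
  assumes "finite V" "\<And>a b. R a b \<Longrightarrow> a \<in> V \<and> b \<in> V"
  shows "card {(a, b). R a b} = (\<Sum>x\<in>V. card {y. R x y})"
proof -
  have "{(a, b). R a b} = Sigma V (\<lambda>x. {y. R x y})" using assms(2) by auto
  moreover have "finite {y. R x y}" for x
    using assms by (auto intro: finite_subset[of _ V])
  ultimately show ?thesis using assms(1) by simp
qed

lemma connected_few_edges_has_leaf:
  assumes fin: "finite V" and inV: "\<And>a b. R a b \<Longrightarrow> a \<in> V \<and> b \<in> V"
    and conn: "connected_on R V" and few: "card {(a, b). R a b} < 2 * card V"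
    and two: "2 \<le> card V"
  obtains x y0 where "x \<in> V" "\<And>y. R x y \<longleftrightarrow> y = y0"
proof -
  have "\<not> (\<forall>x\<in>V. 2 \<le> card {y. R x y})"
    using sum_mono[of V "\<lambda>_. 2" "\<lambda>x. card {y. R x y}"] few
      card_rel_eq_sum_degrees[OF fin inV] by auto
  then obtain x where x: "x \<in> V" "card {y. R x y} \<le> 1" by auto
  have "card (V - {x}) \<noteq> 0" using two x(1) by simp
  then obtain c where "c \<in> V - {x}" by (metis all_not_in_conv card.empty)
  then obtain y0 where y0: "R x y0"
    using conn x(1) unfolding connected_on_def
    by (metis (no_types, lifting) DiffE case_prodD converse_rtranclE mem_Collect_eq singletonI)
  have "finite {y. R x y}" using fin inV by (auto intro: finite_subset[of _ V])
  then have "\<forall>a\<in>{y. R x y}. \<forall>b\<in>{y. R x y}. a = b"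
    using x(2) card_le_Suc0_iff_eq by auto
  then have "R x y \<longleftrightarrow> y = y0" for y using y0 by blast
  then show thesis using that x(1) by blast
qed

text \<open>Removing a leaf keeps the graph connected, lowers the edge count by two and the vertex
  count by one, and cannot destroy a cycle.\<close>
lemma connected_few_edges_not_has_cycle:
  assumes "finite V" "\<And>a b. R a b \<Longrightarrow> a \<in> V \<and> b \<in> V"
    "\<And>a b. R a b \<Longrightarrow> R b a" "\<And>a. \<not> R a a"
    "connected_on R V" "card {(a, b). R a b} < 2 * card V"
  shows "\<not> has_cycle R V"
  using assms
proof (induction "card V" arbitrary: V R rule: less_induct)
  case less
  note fin = less.prems(1) and inV = less.prems(2) and symR = less.prems(3)
    and irrefl = less.prems(4) and conn = less.prems(5) and few = less.prems(6)
  show ?case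
  proof
    assume cyc: "has_cycle R V"
    then have "2 \<le> card V" using has_cycle_card[OF cyc fin] by simp
    then obtain x y0 where x: "x \<in> V" and leaf: "\<And>y. R x y \<longleftrightarrow> y = y0"
      using connected_few_edges_has_leaf[OF fin inV conn few] by blast
    have "y0 \<noteq> x" using leaf irrefl by blast
    let ?R' = "\<lambda>a b. R a b \<and> a \<noteq> x \<and> b \<noteq> x"
    have "{(a, b). R a b} \<subseteq> V \<times> V" using inV by auto
    then have "finite {(a, b). R a b}" using fin finite_subset by blast
    then have "card {(a, b). R a b} = card {(a, b). ?R' a b} + 2"
      using card_rel_remove_leaf[of R x y0, OF _ symR leaf \<open>y0 \<noteq> x\<close>] by blast
    moreover have "card (V - {x}) = card V - 1" using x by simp
    ultimately have "card {(a, b). ?R' a b} < 2 * card (V - {x})" using few by linarith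
    moreover have "card (V - {x}) < card V" using fin x by (rule card_Diff1_less)
    ultimately have "\<not> has_cycle ?R' (V - {x})"
      by (intro less.hyps)
        (use fin inV symR irrefl connected_on_remove_leaf[OF conn symR leaf] in auto)
    moreover have "has_cycle ?R' (V - {x})"
      by (rule has_cycle_avoids_leaf[OF cyc]) (use symR leaf in auto)
    ultimately show False by contradiction
  qed
qed

section \<open>Bipartite edge sets\<close>

lemma badj_Inl_Inr [simp]: "badj E (Inl l) (Inr r) \<longleftrightarrow> (l, r) \<in> E"
  and badj_Inr_Inl [simp]: "badj E (Inr r) (Inl l) \<longleftrightarrow> (l, r) \<in> E"
  by (auto simp: badj_def)

lemma badj_sym: "badj E x y \<Longrightarrow> badj E y x"
  and badj_irrefl: "\<not> badj E x x"
  and badj_mono: "E \<subseteq> F \<Longrightarrow> badj E x y \<Longrightarrow> badj F x y"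
  by (auto simp: badj_def)

lemma rtrancl_badj_sym: "(x, y) \<in> {(a, b). badj E a b}\<^sup>* \<Longrightarrow> (y, x) \<in> {(a, b). badj E a b}\<^sup>*"
proof -
  assume "(x, y) \<in> {(a, b). badj E a b}\<^sup>*"
  then have "(y, x) \<in> ({(a, b). badj E a b}\<inverse>)\<^sup>*" by (simp add: rtrancl_converseI)
  moreover have "{(a, b). badj E a b}\<inverse> = {(a, b). badj E a b}" using badj_sym by blast
  ultimately show ?thesis by simp
qed

lemma finite_right_nbrs: "finite E \<Longrightarrow> finite {r. (l, r) \<in> E}"
proof -
  assume "finite E"
  moreover have "inj (Pair l)" by (auto simp: inj_def)
  ultimately have "finite (Pair l -` E)" by (rule finite_vimageI)
  then show ?thesis by (simp add: vimage_def)
qed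

lemma finite_left_nbrs: "finite E \<Longrightarrow> finite {l. (l, r) \<in> E}"
proof -
  assume "finite E"
  moreover have "inj (\<lambda>l. (l, r))" by (auto simp: inj_def)
  ultimately have "finite ((\<lambda>l. (l, r)) -` E)" by (rule finite_vimageI)
  then show ?thesis by (simp add: vimage_def)
qed

lemma card_eq_sum_ldeg:
  assumes "finite E"
  shows "card E = (\<Sum>l\<in>fst ` E. ldeg E l)"
proof -
  have "card E = card (SIGMA l:fst ` E. {r. (l, r) \<in> E})"
    by (rule arg_cong[of _ _ card]) (auto intro: rev_image_eqI)
  also have "\<dots> = (\<Sum>l\<in>fst ` E. ldeg E l)"
    unfolding ldeg_def using assms finite_right_nbrs[OF assms] by (intro card_SigmaI) auto
  finally show ?thesis .
qed

lemma card_eq_sum_rdeg: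
  assumes "finite E"
  shows "card E = (\<Sum>r\<in>snd ` E. rdeg E r)"
proof -
  have "card E = card (prod.swap ` E)" by (simp add: card_image)
  also have "prod.swap ` E = (SIGMA r:snd ` E. {l. (l, r) \<in> E})"
    by (auto intro: rev_image_eqI)
  also have "card \<dots> = (\<Sum>r\<in>snd ` E. rdeg E r)"
    unfolding rdeg_def using assms finite_left_nbrs[OF assms] by (intro card_SigmaI) auto
  finally show ?thesis .
qed

lemma even_card_sym_diff:
  assumes "finite X" "finite Y"
  shows "even (card (sym_diff X Y)) \<longleftrightarrow> even (card X + card Y)"
proof -
  have "card (sym_diff X Y) = card (X - Y) + card (Y - X)"
    using assms by (intro card_Un_disjoint) auto
  then have "card (sym_diff X Y) + 2 * card (X \<inter> Y) = card X + card Y"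
    using assms card_Int_Diff[of X Y] card_Int_Diff[of Y X] by (simp add: Int_commute)
  then show ?thesis by presburger
qed

lemma even_ldeg_sym_diff:
  assumes "finite G" "finite H"
  shows "even (ldeg (sym_diff G H) l) \<longleftrightarrow> even (ldeg G l + ldeg H l)"
proof -
  have eq: "{r. (l, r) \<in> sym_diff G H} = sym_diff {r. (l, r) \<in> G} {r. (l, r) \<in> H}" by blast
  show ?thesis
    unfolding ldeg_def eq
    by (rule even_card_sym_diff[OF finite_right_nbrs[OF assms(1)] finite_right_nbrs[OF assms(2)]])
qed

lemma even_rdeg_sym_diff:
  assumes "finite G" "finite H"
  shows "even (rdeg (sym_diff G H) r) \<longleftrightarrow> even (rdeg G r + rdeg H r)"
proof -
  have eq: "{l. (l, r) \<in> sym_diff G H} = sym_diff {l. (l, r) \<in> G} {l. (l, r) \<in> H}" by blast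
  show ?thesis
    unfolding rdeg_def eq
    by (rule even_card_sym_diff[OF finite_left_nbrs[OF assms(1)] finite_left_nbrs[OF assms(2)]])
qed

lemma handshake_closed_set:
  assumes "finite S" and closed: "\<And>l r. (l, r) \<in> S \<Longrightarrow> Inl l \<in> K \<longleftrightarrow> Inr r \<in> K"
  defines "E \<equiv> {e \<in> S. Inl (fst e) \<in> K}"
  shows "(\<Sum>l\<in>fst ` E. ldeg S l) = (\<Sum>r\<in>snd ` E. rdeg S r)"
proof -
  have "finite E" using assms(1) unfolding E_def by simp
  have "ldeg E l = ldeg S l" if "l \<in> fst ` E" for l
  proof -
    have "Inl l \<in> K" using that unfolding E_def by auto
    then have "{r. (l, r) \<in> E} = {r. (l, r) \<in> S}" unfolding E_def by auto
    then show ?thesis unfolding ldeg_def by simp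
  qed
  then have "(\<Sum>l\<in>fst ` E. ldeg S l) = card E"
    unfolding card_eq_sum_ldeg[OF \<open>finite E\<close>] by simp
  moreover have "rdeg E r = rdeg S r" if r: "r \<in> snd ` E" for r
  proof -
    obtain l where "(l, r) \<in> S" "Inl l \<in> K" using r unfolding E_def by force
    then have "Inl l' \<in> K" if "(l', r) \<in> S" for l' using closed that by blast
    then have "{l. (l, r) \<in> E} = {l. (l, r) \<in> S}" unfolding E_def by auto
    then show ?thesis unfolding rdeg_def by simp
  qed
  then have "(\<Sum>r\<in>snd ` E. rdeg S r) = card E"
    unfolding card_eq_sum_rdeg[OF \<open>finite E\<close>] by simp
  ultimately show ?thesis by simp
qed

text \<open>Apply the handshake count to the component of \<open>Inl c\<close>: the left side is odd, so the
  component contains a right vertex of odd degree.\<close>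
lemma odd_ldeg_reaches_odd_rdeg:
  assumes fin: "finite S" and odd_c: "odd (ldeg S c)"
    and even_l: "\<And>l. l \<noteq> c \<Longrightarrow> even (ldeg S l)"
    and even_r: "\<And>r. r \<noteq> j \<Longrightarrow> even (rdeg S r)"
  shows "(Inl c, Inr j) \<in> {(a, b). badj S a b}\<^sup>*"
proof (rule ccontr)
  let ?Rel = "{(a, b). badj S a b}"
  define K where "K = {y. (Inl c, y) \<in> ?Rel\<^sup>*}"
  assume "(Inl c, Inr j) \<notin> ?Rel\<^sup>*"
  then have j: "Inr j \<notin> K" unfolding K_def by simp
  have closed: "Inl l \<in> K \<longleftrightarrow> Inr r \<in> K" if "(l, r) \<in> S" for l r
  proof -
    have "(Inl l, Inr r) \<in> ?Rel" "(Inr r, Inl l) \<in> ?Rel" using that by auto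
    then show ?thesis unfolding K_def
      using rtrancl_into_rtrancl[of "Inl c" "Inl l" ?Rel "Inr r"]
        rtrancl_into_rtrancl[of "Inl c" "Inr r" ?Rel "Inl l"] by blast
  qed
  define E where "E = {e \<in> S. Inl (fst e) \<in> K}"
  have "finite E" using fin unfolding E_def by simp
  have "{r. (c, r) \<in> S} \<noteq> {}" using odd_c unfolding ldeg_def by (metis card.empty even_zero)
  moreover have "Inl c \<in> K" unfolding K_def by simp
  ultimately have c: "c \<in> fst ` E" unfolding E_def by (auto intro: rev_image_eqI)
  have "(\<Sum>l\<in>fst ` E. ldeg S l) = ldeg S c + (\<Sum>l\<in>fst ` E - {c}. ldeg S l)"
    using sum.remove[OF finite_imageI[OF \<open>finite E\<close>] c] .
  moreover have "even (\<Sum>l\<in>fst ` E - {c}. ldeg S l)"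
    using even_l by (intro dvd_sum) simp
  ultimately have "odd (\<Sum>l\<in>fst ` E. ldeg S l)" using odd_c by simp
  moreover have "r \<noteq> j" if "r \<in> snd ` E" for r
    using that closed j unfolding E_def by force
  then have "even (\<Sum>r\<in>snd ` E. rdeg S r)" using even_r by (intro dvd_sum) simp
  ultimately show False using handshake_closed_set[OF fin closed] unfolding E_def by simp
qed

lemma single_valued_subset_eq:
  assumes "A \<subseteq> B" "Domain B \<subseteq> Domain A" "single_valued B"
  shows "A = B"
proof
  show "B \<subseteq> A"
  proof
    fix e assume "e \<in> B"
    then obtain l r where e: "e = (l, r)" "(l, r) \<in> B" by (cases e) auto
    then obtain r' where "(l, r') \<in> A" using assms(2) by blast
    moreover have "r' = r" using calculation e(2) assms(1,3) unfolding single_valued_def by blast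
    ultimately show "e \<in> A" using e(1) by simp
  qed
qed (fact assms(1))

lemma exists_edge_diff_same_rdeg:
  assumes "finite A" "rdeg A r = rdeg B r" "(l, r) \<in> A - B"
  shows "\<exists>l'. (l', r) \<in> B - A"
proof (rule ccontr)
  assume "\<not> ?thesis"
  then have "{l. (l, r) \<in> B} \<subseteq> {l. (l, r) \<in> A} - {l}" using assms(3) by auto
  then have "rdeg B r \<le> card ({l. (l, r) \<in> A} - {l})"
    unfolding rdeg_def by (intro card_mono) (simp_all add: finite_left_nbrs assms(1))
  also have "\<dots> < rdeg A r"
    unfolding rdeg_def using assms(3) finite_left_nbrs[OF assms(1)]
    by (intro card_Diff1_less) auto
  finally show False using assms(2) by simp
qed

lemma alternating_edge_sequence:
  assumes "A - B \<noteq> {}"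
    and return: "\<And>l r. (l, r) \<in> A - B \<Longrightarrow> \<exists>l'. (l', r) \<in> B - A"
    and "Domain B \<subseteq> Domain A" "single_valued B"
  obtains f where "\<And>t. f t \<in> A - B" "\<And>t. (fst (f (Suc t)), snd (f t)) \<in> B - A"
proof -
  have "\<exists>e'. e' \<in> A - B \<and> (fst e', snd e) \<in> B - A" if e: "e \<in> A - B" for e
  proof -
    obtain l' where l': "(l', snd e) \<in> B - A" using return[of "fst e" "snd e"] e by auto
    then obtain r' where "(l', r') \<in> A" using assms(3) by blast
    moreover have "(l', r') \<notin> B"
      using l' calculation assms(4) unfolding single_valued_def by blast
    ultimately show ?thesis using l' by (intro exI[of _ "(l', r')"]) auto
  qed
  then have "\<exists>f. \<forall>t. f t \<in> A - B \<and> (fst (f (Suc t)), snd (f t)) \<in> B - A"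
    using assms(1) by (intro dependent_nat_choice) auto
  then show thesis using that by blast
qed

text \<open>If \<open>A \<noteq> B\<close>, edges of \<open>A - B\<close> and \<open>B - A\<close> alternate along an infinite walk in \<open>T\<close>
  that never backtracks, which must close a cycle.\<close>
lemma single_valued_subgraphs_of_forest_eq:
  assumes "finite V" and edges: "\<forall>(l, r)\<in>T. Inl l \<in> V \<and> Inr r \<in> V"
    and acyclic: "\<not> has_cycle (badj T) V"
    and "A \<subseteq> T" "B \<subseteq> T" "Domain A = Domain B" "single_valued A" "single_valued B"
    and "finite A" "finite B" "\<And>r. rdeg A r = rdeg B r"
  shows "A = B"
proof (rule ccontr)
  assume "A \<noteq> B"
  then have "A - B \<noteq> {}" using single_valued_subset_eq[of A B] assms(6,8) by auto
  moreover have "\<exists>l'. (l', r) \<in> B - A" if "(l, r) \<in> A - B" for l r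
    using exists_edge_diff_same_rdeg that assms(9,11) by blast
  ultimately obtain f where f: "\<And>t. f t \<in> A - B" "\<And>t. (fst (f (Suc t)), snd (f t)) \<in> B - A"
    using alternating_edge_sequence[of A B] assms(6,8) by blast
  define w where "w m = (if even m then Inl (fst (f (m div 2))) else Inr (snd (f (m div 2))))" for m
  have w_even: "w (2 * t) = Inl (fst (f t))" and w_odd: "w (Suc (2 * t)) = Inr (snd (f t))" for t
    unfolding w_def by simp_all
  have "has_cycle (badj T) V"
  proof (rule non_backtracking_walk_has_cycle[OF \<open>finite V\<close>])
    fix m
    have "\<exists>t. m = 2 * t \<or> m = Suc (2 * t)" by presburger
    then obtain t where m: "m = 2 * t \<or> m = Suc (2 * t)" by blast
    have edge_A: "(fst (f t), snd (f t)) \<in> T" and edge_B: "(fst (f (Suc t)), snd (f t)) \<in> T"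
      using f assms(4,5) by auto
    have "fst (f (Suc t)) \<noteq> fst (f t)"
      using f(1)[of t] f(2)[of t] by (cases "f t") auto
    moreover have "snd (f (Suc t)) \<noteq> snd (f t)"
      using f(1)[of "Suc t"] f(2)[of t] by (cases "f (Suc t)") auto
    moreover have "Inl (fst (f t)) \<in> V" "Inr (snd (f t)) \<in> V"
      using edges edge_A by auto
    moreover have "w (Suc (Suc (2 * t))) = Inl (fst (f (Suc t)))"
      and "w (Suc (Suc (Suc (2 * t)))) = Inr (snd (f (Suc t)))"
      using w_even[of "Suc t"] w_odd[of "Suc t"] by simp_all
    ultimately show "w m \<in> V" "badj T (w m) (w (Suc m))" "w (Suc (Suc m)) \<noteq> w m"
      using m edge_A edge_B w_even[of t] w_odd[of t] by auto
  qed (rule badj_irrefl)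
  then show False using acyclic by contradiction
qed

lemma is_tree_on_iff:
  "is_tree_on V E \<longleftrightarrow> V \<noteq> {} \<and> (\<forall>(l, r)\<in>E. Inl l \<in> V \<and> Inr r \<in> V) \<and>
     connected_on (badj E) V \<and> \<not> has_cycle (badj E) V"
  unfolding is_tree_on_def connected_on_def has_cycle_def by (rule refl)

lemma card_badj: "finite E \<Longrightarrow> card {(a, b). badj E a b} = 2 * card E"
proof -
  assume "finite E"
  let ?lr = "\<lambda>e. (Inl (fst e) :: nat + nat, Inr (snd e) :: nat + nat)"
  let ?rl = "\<lambda>e. (Inr (snd e) :: nat + nat, Inl (fst e) :: nat + nat)"
  have "{(a, b). badj E a b} = ?lr ` E \<union> ?rl ` E" unfolding badj_def by force
  moreover have "inj_on ?lr E" "inj_on ?rl E" by (auto simp: inj_on_def prod_eq_iff)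
  moreover have "?lr ` E \<inter> ?rl ` E = {}" by auto
  ultimately show ?thesis using \<open>finite E\<close> by (simp add: card_Un_disjoint card_image)
qed

lemma is_tree_onI_card:
  assumes "finite V" "V \<noteq> {}" "finite E" and edges: "\<forall>(l, r)\<in>E. Inl l \<in> V \<and> Inr r \<in> V"
    and "connected_on (badj E) V" "card E < card V"
  shows "is_tree_on V E"
proof -
  have "badj E a b \<Longrightarrow> a \<in> V \<and> b \<in> V" for a b using edges unfolding badj_def by auto
  moreover have "card {(a, b). badj E a b} < 2 * card V"
    using card_badj[OF assms(3)] assms(6) by simp
  ultimately have "\<not> has_cycle (badj E) V"
    using connected_few_edges_not_has_cycle[of V "badj E", OF assms(1) _ badj_sym badj_irrefl assms(5)]
    by blast
  then show ?thesis unfolding is_tree_on_iff using assms by blast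
qed

section \<open>Topes\<close>

lemma ldeg_eq_indicator_iff:
  assumes "finite G"
  shows "(\<forall>l. ldeg G l = (if l \<in> \<sigma> then 1 else 0)) \<longleftrightarrow> Domain G = \<sigma> \<and> single_valued G"
proof -
  have "ldeg G l = (if l \<in> \<sigma> then 1 else 0) \<longleftrightarrow>
      (l \<in> Domain G \<longleftrightarrow> l \<in> \<sigma>) \<and> (\<forall>r r'. (l, r) \<in> G \<longrightarrow> (l, r') \<in> G \<longrightarrow> r = r')" for l
  proof -
    have fin: "finite {r. (l, r) \<in> G}" using finite_right_nbrs[OF assms] .
    have "card {r. (l, r) \<in> G} = 0 \<longleftrightarrow> l \<notin> Domain G" using fin by auto
    moreover have "card {r. (l, r) \<in> G} = 1 \<longleftrightarrow>
        l \<in> Domain G \<and> (\<forall>r r'. (l, r) \<in> G \<longrightarrow> (l, r') \<in> G \<longrightarrow> r = r')"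
      using card_1_singleton_iff[of "{r. (l, r) \<in> G}"] by (auto simp: set_eq_iff)
    ultimately show ?thesis unfolding ldeg_def by auto
  qed
  then show ?thesis unfolding single_valued_def by blast
qed

lemma is_tope_iff:
  assumes "\<sigma> \<subseteq> {0..<n}"
  shows "is_tope n d v \<sigma> G \<longleftrightarrow>
    G \<subseteq> {0..<n} \<times> {0..<d} \<and> Domain G = \<sigma> \<and> single_valued G \<and> (\<forall>r<d. rdeg G r = v r)"
proof (cases "G \<subseteq> {0..<n} \<times> {0..<d}")
  case True
  then have "finite G" using finite_subset by blast
  have "ldeg G l = (if l \<in> \<sigma> then 1 else 0)" if "\<not> l < n" for l
  proof -
    have "{r. (l, r) \<in> G} = {}" using True that by auto
    then show ?thesis unfolding ldeg_def using assms that by auto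
  qed
  then have "(\<forall>l<n. ldeg G l = (if l \<in> \<sigma> then 1 else 0)) \<longleftrightarrow>
      (\<forall>l. ldeg G l = (if l \<in> \<sigma> then 1 else 0))"
    by blast
  then show ?thesis
    unfolding is_tope_def ldeg_eq_indicator_iff[OF \<open>finite G\<close>] using True by blast
qed (simp add: is_tope_def)

lemma is_tope_finite: "is_tope n d v \<sigma> G \<Longrightarrow> finite G"
  unfolding is_tope_def by (auto intro: finite_subset)

lemma ldeg_tope:
  assumes "is_tope n d v \<sigma> G" "\<sigma> \<subseteq> {0..<n}"
  shows "ldeg G l = (if l \<in> \<sigma> then 1 else 0)"
proof -
  have "Domain G = \<sigma> \<and> single_valued G" using is_tope_iff[OF assms(2)] assms(1) by blast
  then show ?thesis using ldeg_eq_indicator_iff[OF is_tope_finite[OF assms(1)]] by blast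
qed

lemma rdeg_tope:
  assumes "is_tope n d v \<sigma> G"
  shows "rdeg G r = (if r < d then v r else 0)"
proof (cases "r < d")
  case False
  then have "{l. (l, r) \<in> G} = {}" using assms unfolding is_tope_def by auto
  then show ?thesis unfolding rdeg_def using False by simp
qed (use assms in \<open>simp add: is_tope_def\<close>)

lemma card_single_valued: "single_valued G \<Longrightarrow> card G = card (Domain G)"
  unfolding Domain_fst single_valued_def
  by (rule card_image[symmetric]) (auto simp: inj_on_def prod_eq_iff)

lemma is_tope_insert:
  assumes G: "is_tope n d v \<sigma> G" and \<sigma>: "\<sigma> \<subseteq> {0..<n}" and e: "e \<notin> \<sigma>" "e < n" and "j < d"
  shows "is_tope n d (v(j := v j + 1)) (insert e \<sigma>) (insert (e, j) G)"
proof -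
  have box: "G \<subseteq> {0..<n} \<times> {0..<d}" and dom: "Domain G = \<sigma>" and sv: "single_valued G"
    and rdeg: "\<forall>r<d. rdeg G r = v r"
    using G unfolding is_tope_iff[OF \<sigma>] by blast+
  have "rdeg (insert (e, j) G) r = (v(j := v j + 1)) r" if "r < d" for r
  proof (cases "r = j")
    case True
    have "e \<notin> {l. (l, r) \<in> G}" using dom e(1) by blast
    moreover have "{l. (l, r) \<in> insert (e, j) G} = insert e {l. (l, r) \<in> G}" using True by blast
    ultimately have "rdeg (insert (e, j) G) r = Suc (rdeg G r)"
      unfolding rdeg_def using finite_left_nbrs[OF is_tope_finite[OF G]] by simp
    then show ?thesis using True that rdeg by simp
  next
    case False
    then have "{l. (l, r) \<in> insert (e, j) G} = {l. (l, r) \<in> G}" by blast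
    then have "rdeg (insert (e, j) G) r = rdeg G r" unfolding rdeg_def by simp
    then show ?thesis using False that rdeg by simp
  qed
  moreover have "single_valued (insert (e, j) G)"
    using sv dom e(1) unfolding single_valued_def by blast
  moreover have "Domain (insert (e, j) G) = insert e \<sigma>" using dom by simp
  moreover have "insert (e, j) G \<subseteq> {0..<n} \<times> {0..<d}" using box e(2) \<open>j < d\<close> by simp
  moreover have "insert e \<sigma> \<subseteq> {0..<n}" using \<sigma> e(2) by simp
  ultimately show ?thesis by (subst is_tope_iff) simp_all
qed

lemma topes_in_forest_eq:
  assumes "finite V" "\<forall>(l, r)\<in>T. Inl l \<in> V \<and> Inr r \<in> V" "\<not> has_cycle (badj T) V"
    and "X \<subseteq> T" "Y \<subseteq> T" "is_tope n d u \<sigma> X" "is_tope n d u \<sigma> Y" "\<sigma> \<subseteq> {0..<n}"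
  shows "X = Y"
proof (rule single_valued_subgraphs_of_forest_eq[OF assms(1-5)])
  have "Domain X = \<sigma>" "single_valued X" "Domain Y = \<sigma>" "single_valued Y"
    using is_tope_iff[OF assms(8)] assms(6,7) by blast+
  then show "Domain X = Domain Y" "single_valued X" "single_valued Y" by simp_all
  show "finite X" "finite Y" using is_tope_finite assms(6,7) by blast+
  show "rdeg X r = rdeg Y r" for r using rdeg_tope[OF assms(6)] rdeg_tope[OF assms(7)] by simp
qed

section \<open>Families of sets with large pairwise intersections\<close>

lemma card_Int_Un_of_near_sets:
  assumes "card X = Suc s" "card Y = Suc s" "X \<noteq> Y" "s \<le> card (X \<inter> Y)"
  shows "card (X \<inter> Y) = s" "card (X \<union> Y) = Suc (Suc s)"
proof -
  have fin: "finite X" "finite Y" using assms(1,2) card.infinite by force+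
  have "card (X \<inter> Y) \<noteq> Suc s"
    using card_seteq[OF fin(1), of "X \<inter> Y"] card_seteq[OF fin(2), of "X \<inter> Y"] assms(1-3)
    by auto
  moreover have "card (X \<inter> Y) \<le> Suc s" using card_mono[OF fin(1), of "X \<inter> Y"] assms(1) by auto
  ultimately show "card (X \<inter> Y) = s" using assms(4) by simp
  then show "card (X \<union> Y) = Suc (Suc s)" using card_Un_Int[OF fin] assms(1,2) by simp
qed

lemma near_sets_star_or_hull:
  assumes card: "\<And>Z. Z \<in> F \<Longrightarrow> card Z = Suc s"
    and inter: "\<And>Z Z'. Z \<in> F \<Longrightarrow> Z' \<in> F \<Longrightarrow> Z \<noteq> Z' \<Longrightarrow> s \<le> card (Z \<inter> Z')"
    and XY: "X \<in> F" "Y \<in> F" "X \<noteq> Y"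
  shows "(\<forall>Z\<in>F. X \<inter> Y \<subseteq> Z) \<or> (\<forall>Z\<in>F. Z \<subseteq> X \<union> Y)"
proof -
  have fin: "finite Z" if "Z \<in> F" for Z using card[OF that] card.infinite by force
  have K: "card (X \<inter> Y) = s" using card_Int_Un_of_near_sets card XY inter by blast
  have eq_if_card_le: "A = B" if "A \<subseteq> B" "B \<subseteq> Z" "Z \<in> F" "card B \<le> card A" for A B Z
    using card_seteq[OF finite_subset[OF that(2) fin[OF that(3)]] that(1,4)] .
  have outside: "Z \<inter> (X \<union> Y) = X \<inter> Y" if Z: "Z \<in> F" "\<not> Z \<subseteq> X \<union> Y" for Z
  proof -
    have "Z \<noteq> X" "Z \<noteq> Y" using Z by auto
    have "card (Z \<inter> (X \<union> Y)) < Suc s"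
      using psubset_card_mono[OF fin[OF Z(1)], of "Z \<inter> (X \<union> Y)"] Z card by auto
    then have "Z \<inter> X = Z \<inter> (X \<union> Y)" "Z \<inter> Y = Z \<inter> (X \<union> Y)"
      using eq_if_card_le[of "Z \<inter> X" "Z \<inter> (X \<union> Y)" Z] eq_if_card_le[of "Z \<inter> Y" "Z \<inter> (X \<union> Y)" Z]
        inter[OF Z(1) XY(1) \<open>Z \<noteq> X\<close>] inter[OF Z(1) XY(2) \<open>Z \<noteq> Y\<close>] Z(1) by auto
    then have "Z \<inter> (X \<union> Y) \<subseteq> X \<inter> Y" by blast
    moreover have "card (X \<inter> Y) \<le> card (Z \<inter> (X \<union> Y))"
      using inter[OF Z(1) XY(1) \<open>Z \<noteq> X\<close>] K \<open>Z \<inter> X = _\<close> by simp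
    ultimately show ?thesis using eq_if_card_le[of _ _ X] XY(1) by blast
  qed
  show ?thesis
  proof (rule disjCI)
    assume "\<not> (\<forall>Z\<in>F. Z \<subseteq> X \<union> Y)"
    then obtain Z0 where Z0: "Z0 \<in> F" "\<not> Z0 \<subseteq> X \<union> Y" by blast
    show "\<forall>Z\<in>F. X \<inter> Y \<subseteq> Z"
    proof
      fix Z assume Z: "Z \<in> F"
      show "X \<inter> Y \<subseteq> Z"
      proof (cases "Z \<subseteq> X \<union> Y")
        case True
        then have "Z \<noteq> Z0" "Z \<inter> Z0 \<subseteq> X \<inter> Y" using Z0 outside[OF Z0] by auto
        then have "Z \<inter> Z0 = X \<inter> Y"
          using eq_if_card_le[of "Z \<inter> Z0" "X \<inter> Y" X] inter[OF Z Z0(1)] K XY(1) by auto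
        then show ?thesis by blast
      qed (use outside[OF Z] in blast)
    qed
  qed
qed

lemma near_sets_common_hull:
  fixes N :: "'a \<Rightarrow> 'a set"
  assumes "P \<noteq> {}" and N: "\<And>c. c \<in> P \<Longrightarrow> N c \<subseteq> P - {c}" "\<And>c. c \<in> P \<Longrightarrow> card (N c) = Suc s"
    and "0 < s" and inter: "\<And>a c. a \<in> P \<Longrightarrow> c \<in> P \<Longrightarrow> a \<noteq> c \<Longrightarrow> s \<le> card (N a \<inter> N c)"
  obtains W where "W \<subseteq> P" "card W = Suc (Suc s)" "\<And>c. c \<in> P \<Longrightarrow> N c \<subseteq> W"
proof -
  obtain a c where ac: "a \<in> P" "c \<in> P" "N a \<noteq> N c"
  proof -
    obtain c0 where "c0 \<in> P" using assms(1) by blast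
    moreover obtain b where "b \<in> N c0" using N(2)[OF \<open>c0 \<in> P\<close>] by fastforce
    ultimately have "b \<in> P" "N b \<noteq> N c0" using N(1) by blast+
    then show thesis using that \<open>c0 \<in> P\<close> by blast
  qed
  have inter': "s \<le> card (Z \<inter> Z')" if "Z \<in> N ` P" "Z' \<in> N ` P" "Z \<noteq> Z'" for Z Z'
    using that inter by blast
  have K: "card (N a \<inter> N c) = s" "card (N a \<union> N c) = Suc (Suc s)"
    using card_Int_Un_of_near_sets[OF N(2)[OF ac(1)] N(2)[OF ac(2)] ac(3)] inter ac by auto
  have "\<not> (\<forall>Z\<in>N ` P. N a \<inter> N c \<subseteq> Z)"
  proof
    assume star: "\<forall>Z\<in>N ` P. N a \<inter> N c \<subseteq> Z"
    obtain b where b: "b \<in> N a \<inter> N c" using K(1) \<open>0 < s\<close> card_gt_0_iff[of "N a \<inter> N c"] by blast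
    then have "b \<in> P" using N(1) ac(1) by blast
    then show False using star b N(1) by blast
  qed
  then have "\<forall>Z\<in>N ` P. Z \<subseteq> N a \<union> N c"
    using near_sets_star_or_hull[of "N ` P" s "N a" "N c"] N(2) inter' ac by blast
  then show thesis using that[of "N a \<union> N c"] K(2) N(1) ac by blast
qed

section \<open>Linkage tope fields and amalgamation\<close>

lemma psubsets_card_pred:
  assumes "finite \<tau>" "card \<tau> = Suc m"
  shows "{\<sigma>. \<sigma> \<subset> \<tau> \<and> card \<sigma> = m} = (\<lambda>a. \<tau> - {a}) ` \<tau>"
proof (intro set_eqI iffI)
  fix \<sigma> assume "\<sigma> \<in> {\<sigma>. \<sigma> \<subset> \<tau> \<and> card \<sigma> = m}"
  then have \<sigma>: "\<sigma> \<subset> \<tau>" "card \<sigma> = m" by auto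
  then obtain a where a: "a \<in> \<tau>" "a \<notin> \<sigma>" by blast
  then have "\<sigma> \<subseteq> \<tau> - {a}" using \<sigma> by blast
  moreover have "card (\<tau> - {a}) \<le> card \<sigma>" using \<sigma>(2) a(1) assms by simp
  ultimately have "\<sigma> = \<tau> - {a}" using card_seteq[OF finite_Diff[OF assms(1)]] by blast
  then show "\<sigma> \<in> (\<lambda>a. \<tau> - {a}) ` \<tau>" using a(1) by blast
next
  fix \<sigma> assume "\<sigma> \<in> (\<lambda>a. \<tau> - {a}) ` \<tau>"
  then obtain a where "a \<in> \<tau>" "\<sigma> = \<tau> - {a}" by blast
  then show "\<sigma> \<in> {\<sigma>. \<sigma> \<subset> \<tau> \<and> card \<sigma> = m}" using assms by auto
qed

lemma linkage_covector_eq_UN: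
  assumes "finite \<tau>" "card \<tau> = Suc (thickness d v)"
  shows "linkage_covector n d v M \<tau> = (\<Union>a\<in>\<tau>. M (\<tau> - {a}))"
proof -
  have "{M \<sigma> |\<sigma>. \<sigma> \<subset> \<tau> \<and> card \<sigma> = thickness d v} = M ` {\<sigma>. \<sigma> \<subset> \<tau> \<and> card \<sigma> = thickness d v}"
    by auto
  then show ?thesis unfolding linkage_covector_def psubsets_card_pred[OF assms] by simp
qed

lemma thickness_fun_upd_Suc:
  assumes "i < d"
  shows "thickness d (v(i := v i + 1)) = Suc (thickness d v)"
proof -
  have i: "i \<in> {..<d}" using assms by simp
  have "thickness d (v(i := v i + 1)) = (v i + 1) + (\<Sum>j\<in>{..<d} - {i}. v j)"
    unfolding thickness_def sum.remove[OF finite_lessThan i] by simp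
  also have "\<dots> = Suc (thickness d v)"
    unfolding thickness_def sum.remove[OF finite_lessThan i] by simp
  finally show ?thesis .
qed

locale linkage_field =
  fixes n d :: nat and v :: "nat \<Rightarrow> nat" and M :: "nat set \<Rightarrow> (nat \<times> nat) set"
  assumes linkage: "linkage_tope_field n d v M"
begin

abbreviation k :: nat where "k \<equiv> thickness d v"

abbreviation C :: "nat set \<Rightarrow> (nat \<times> nat) set" where "C \<equiv> linkage_covector n d v M"

lemma v_pos: "j < d \<Longrightarrow> 0 < v j"
  using linkage unfolding linkage_tope_field_def tope_field_def valid_type_def by blast

lemma tope_M: "\<sigma> \<subseteq> {0..<n} \<Longrightarrow> card \<sigma> = k \<Longrightarrow> is_tope n d v \<sigma> (M \<sigma>)"
  using linkage unfolding linkage_tope_field_def tope_field_def by blast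

lemma tree_C:
  "\<tau> \<subseteq> {0..<n} \<Longrightarrow> card \<tau> = Suc k \<Longrightarrow> is_tree_on (Inl ` \<tau> \<union> Inr ` {0..<d}) (C \<tau>)"
  using linkage unfolding linkage_tope_field_def by simp

context
  fixes \<tau> assumes \<tau>: "\<tau> \<subseteq> {0..<n}" "card \<tau> = Suc k"
begin

lemma finite_\<tau>: "finite \<tau>"
  using \<tau>(1) finite_subset by blast

lemma M_subset_C: "a \<in> \<tau> \<Longrightarrow> M (\<tau> - {a}) \<subseteq> C \<tau>"
  using linkage_covector_eq_UN[OF finite_\<tau> \<tau>(2)] by blast

lemma tope_M_minus: "a \<in> \<tau> \<Longrightarrow> is_tope n d v (\<tau> - {a}) (M (\<tau> - {a}))"
  by (rule tope_M) (use \<tau> finite_\<tau> in auto)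

lemma C_edges: "\<forall>(l, r)\<in>C \<tau>. Inl l \<in> Inl ` \<tau> \<union> Inr ` {0..<d} \<and> Inr r \<in> Inl ` \<tau> \<union> Inr ` {0..<d}"
  and C_acyclic: "\<not> has_cycle (badj (C \<tau>)) (Inl ` \<tau> \<union> Inr ` {0..<d})"
  using tree_C[OF \<tau>] unfolding is_tree_on_iff by blast+

lemma C_edge: "(l, r) \<in> C \<tau> \<Longrightarrow> l \<in> \<tau> \<and> r < d"
  using C_edges by auto

lemma finite_C: "finite (C \<tau>)"
proof (rule finite_subset)
  show "C \<tau> \<subseteq> \<tau> \<times> {0..<d}" using C_edge by auto
qed (use finite_\<tau> in simp)

lemma topes_in_C_eq:
  "X \<subseteq> C \<tau> \<Longrightarrow> Y \<subseteq> C \<tau> \<Longrightarrow> is_tope n d u \<tau> X \<Longrightarrow> is_tope n d u \<tau> Y \<Longrightarrow> X = Y"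
  by (rule topes_in_forest_eq[OF _ C_edges C_acyclic _ _ _ _ \<tau>(1)]) (use finite_\<tau> in simp_all)

lemma insert_edge_tope_in_C:
  assumes "(e, j) \<in> C \<tau>"
  shows "insert (e, j) (M (\<tau> - {e})) \<subseteq> C \<tau>"
    and "is_tope n d (v(j := v j + 1)) \<tau> (insert (e, j) (M (\<tau> - {e})))"
proof -
  have e: "e \<in> \<tau>" "j < d" using C_edge assms by auto
  show "insert (e, j) (M (\<tau> - {e})) \<subseteq> C \<tau>" using M_subset_C[OF e(1)] assms by blast
  have "is_tope n d (v(j := v j + 1)) (insert e (\<tau> - {e})) (insert (e, j) (M (\<tau> - {e})))"
    by (rule is_tope_insert[OF tope_M_minus[OF e(1)]]) (use e \<tau>(1) in auto)
  then show "is_tope n d (v(j := v j + 1)) \<tau> (insert (e, j) (M (\<tau> - {e})))"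
    using e(1) by (simp add: insert_absorb)
qed

text \<open>If \<open>j\<close> had two neighbours \<open>a, b\<close> in \<open>C \<tau>\<close> beyond those of \<open>M (\<tau> - {a})\<close>, the topes
  obtained by adding \<open>(a, j)\<close> to \<open>M (\<tau> - {a})\<close> and \<open>(b, j)\<close> to \<open>M (\<tau> - {b})\<close> would both lie in
  the tree \<open>C \<tau>\<close>, hence coincide.\<close>
lemma rdeg_C_le:
  assumes "j < d"
  shows "rdeg (C \<tau>) j \<le> Suc (v j)"
proof (rule ccontr)
  let ?Nj = "{l. (l, j) \<in> C \<tau>}"
  assume "\<not> ?thesis"
  then have big: "Suc (v j) < card ?Nj" unfolding rdeg_def by simp
  then have "?Nj \<noteq> {}" and fin: "finite ?Nj" using card_gt_0_iff[of ?Nj] by auto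
  then obtain a where a: "(a, j) \<in> C \<tau>" by blast
  then have "a \<in> \<tau>" using C_edge by blast
  let ?Ma = "{l. (l, j) \<in> M (\<tau> - {a})}"
  have "card ?Ma = v j"
    using rdeg_tope[OF tope_M_minus[OF \<open>a \<in> \<tau>\<close>]] assms unfolding rdeg_def by simp
  also have "\<dots> < card (?Nj - {a})" using big a fin by (simp add: card_Diff_singleton)
  finally have "\<not> ?Nj - {a} \<subseteq> ?Ma"
    using card_mono[OF finite_left_nbrs[where r = j, OF is_tope_finite[OF tope_M_minus[OF \<open>a \<in> \<tau>\<close>]]],
        of "?Nj - {a}"]
    by (meson leD)
  then obtain b where b: "(b, j) \<in> C \<tau>" "b \<noteq> a" "(b, j) \<notin> M (\<tau> - {a})" by blast
  have "insert (a, j) (M (\<tau> - {a})) = insert (b, j) (M (\<tau> - {b}))"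
    by (rule topes_in_C_eq[OF insert_edge_tope_in_C(1)[OF a] insert_edge_tope_in_C(1)[OF b(1)]
          insert_edge_tope_in_C(2)[OF a] insert_edge_tope_in_C(2)[OF b(1)]])
  then have "(b, j) \<in> insert (a, j) (M (\<tau> - {a}))" by simp
  then show False using b(2,3) by simp
qed

end

end

locale linkage_amalgamation = linkage_field +
  fixes i :: nat
  assumes i_lt_d: "i < d"
begin

abbreviation A :: "nat set \<Rightarrow> (nat \<times> nat) set" where "A \<equiv> amalgamation n d v M i"

context
  fixes \<tau> assumes \<tau>: "\<tau> \<subseteq> {0..<n}" "card \<tau> = Suc k"
begin

lemma exists_i_edge_C: "\<exists>e. (e, i) \<in> C \<tau>"
proof -
  obtain a where a: "a \<in> \<tau>" using \<tau>(2) card_gt_0_iff[of \<tau>] by auto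
  have "rdeg (M (\<tau> - {a})) i \<noteq> 0" using rdeg_tope[OF tope_M_minus[OF \<tau> a]] v_pos i_lt_d by simp
  then obtain e where "(e, i) \<in> M (\<tau> - {a})" unfolding rdeg_def by fastforce
  then show ?thesis using M_subset_C[OF \<tau> a] by blast
qed

lemma amalgamation_eq_insert:
  assumes "(e, i) \<in> C \<tau>"
  shows "A \<tau> = insert (e, i) (M (\<tau> - {e}))"
  unfolding amalgamation_def
proof (rule the_equality)
  show "insert (e, i) (M (\<tau> - {e})) \<subseteq> C \<tau> \<and>
      is_tope n d (v(i := v i + 1)) \<tau> (insert (e, i) (M (\<tau> - {e})))"
    using insert_edge_tope_in_C[OF \<tau> assms] by blast
  then show "G = insert (e, i) (M (\<tau> - {e}))"
    if "G \<subseteq> C \<tau> \<and> is_tope n d (v(i := v i + 1)) \<tau> G" for G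
    using topes_in_C_eq[OF \<tau>, of G "insert (e, i) (M (\<tau> - {e}))"] that by blast
qed

lemma amalgamation_subset_C: "A \<tau> \<subseteq> C \<tau>"
  and amalgamation_tope: "is_tope n d (v(i := v i + 1)) \<tau> (A \<tau>)"
  using exists_i_edge_C amalgamation_eq_insert insert_edge_tope_in_C[OF \<tau>] by metis+

lemma left_nbrs_amalgamation: "{l. (l, i) \<in> A \<tau>} = {l. (l, i) \<in> C \<tau>}"
  using amalgamation_subset_C amalgamation_eq_insert by blast

end

end

locale amalgamation_covector = linkage_amalgamation +
  fixes \<rho> :: "nat set"
  assumes \<rho>: "\<rho> \<subseteq> {0..<n}" "card \<rho> = Suc (Suc k)"
begin

definition N :: "nat \<Rightarrow> nat set" where "N c = {l. (l, i) \<in> A (\<rho> - {c})}"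

definition W :: "nat set" where "W = (\<Union>c\<in>\<rho>. N c)"

definition H :: "(nat \<times> nat) set" where "H = (\<Union>e\<in>W. insert (e, i) (A (\<rho> - {e})))"

definition D :: "(nat \<times> nat) set" where "D = (\<Union>c\<in>\<rho>. A (\<rho> - {c}))"

lemma finite_\<rho>: "finite \<rho>"
  using \<rho>(1) finite_subset by blast

lemma \<rho>_minus: "c \<in> \<rho> \<Longrightarrow> \<rho> - {c} \<subseteq> {0..<n}" "c \<in> \<rho> \<Longrightarrow> card (\<rho> - {c}) = Suc k"
  using \<rho> finite_\<rho> by auto

lemma M_pair_subset_C:
  assumes "a \<in> \<rho>" "c \<in> \<rho>" "a \<noteq> c"
  shows "M (\<rho> - {a, c}) \<subseteq> C (\<rho> - {c})"
proof -
  have "\<rho> - {c} - {a} = \<rho> - {a, c}" by auto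
  then show ?thesis using M_subset_C[OF \<rho>_minus[OF assms(2)], of a] assms by simp
qed

lemma tope_M_pair:
  assumes "a \<in> \<rho>" "c \<in> \<rho>" "a \<noteq> c"
  shows "is_tope n d v (\<rho> - {a, c}) (M (\<rho> - {a, c}))"
proof -
  have "\<rho> - {c} - {a} = \<rho> - {a, c}" by auto
  then show ?thesis using tope_M_minus[OF \<rho>_minus[OF assms(2)], of a] assms by simp
qed

lemma N_eq: "c \<in> \<rho> \<Longrightarrow> N c = {l. (l, i) \<in> C (\<rho> - {c})}"
  unfolding N_def using left_nbrs_amalgamation[OF \<rho>_minus] by simp

lemma amalgamation_eq_insert_pair:
  assumes "c \<in> \<rho>" "e \<in> N c"
  shows "A (\<rho> - {c}) = insert (e, i) (M (\<rho> - {c, e}))"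
proof -
  have "\<rho> - {c} - {e} = \<rho> - {c, e}" by auto
  then show ?thesis
    using amalgamation_eq_insert[OF \<rho>_minus[OF assms(1)]] assms N_eq by simp
qed

lemma N_subset: "c \<in> \<rho> \<Longrightarrow> N c \<subseteq> \<rho> - {c}"
  using N_eq C_edge[OF \<rho>_minus] by blast

lemma card_N: "c \<in> \<rho> \<Longrightarrow> card (N c) = Suc (v i)"
  using rdeg_tope[OF amalgamation_tope[OF \<rho>_minus]] i_lt_d unfolding N_def rdeg_def by simp

lemma card_N_Int:
  assumes "a \<in> \<rho>" "c \<in> \<rho>" "a \<noteq> c"
  shows "v i \<le> card (N a \<inter> N c)"
proof -
  let ?L = "{l. (l, i) \<in> M (\<rho> - {a, c})}"
  have "M (\<rho> - {a, c}) \<subseteq> C (\<rho> - {c})" "M (\<rho> - {a, c}) \<subseteq> C (\<rho> - {a})"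
    using M_pair_subset_C[OF assms] M_pair_subset_C[of c a] assms by (auto simp: insert_commute)
  then have "?L \<subseteq> N a \<inter> N c" using N_eq assms(1,2) by blast
  moreover have "card ?L = v i"
    using rdeg_tope[OF tope_M_pair[OF assms]] i_lt_d unfolding rdeg_def by simp
  moreover have "finite (N a)" using N_subset[OF assms(1)] finite_\<rho> finite_subset by blast
  ultimately show ?thesis using card_mono[of "N a \<inter> N c" ?L] by auto
qed

lemma W_hull: "W \<subseteq> \<rho> \<and> card W = Suc (Suc (v i)) \<and> (\<forall>e\<in>W. N e = W - {e})"
proof -
  have "\<rho> \<noteq> {}" using \<rho>(2) by auto
  then obtain W' where W': "W' \<subseteq> \<rho>" "card W' = Suc (Suc (v i))" "\<And>c. c \<in> \<rho> \<Longrightarrow> N c \<subseteq> W'"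
    using near_sets_common_hull[of \<rho> N "v i"] N_subset card_N v_pos[OF i_lt_d] card_N_Int
    by blast
  have "finite W'" using W'(1) finite_\<rho> finite_subset by blast
  have N_W': "N e = W' - {e}" if "e \<in> W'" for e
  proof -
    have "e \<in> \<rho>" using that W'(1) by blast
    then have "N e \<subseteq> W' - {e}" using W'(3) N_subset by blast
    moreover have "card (W' - {e}) \<le> card (N e)" using W'(2) card_N[OF \<open>e \<in> \<rho>\<close>] that by simp
    ultimately show ?thesis using card_seteq \<open>finite W'\<close> by blast
  qed
  have "W' \<subseteq> W"
  proof
    fix x assume x: "x \<in> W'"
    have "card (W' - {x}) \<noteq> 0" using W'(2) x \<open>finite W'\<close> by simp
    then obtain y where y: "y \<in> W'" "y \<noteq> x" by (metis DiffE card.empty ex_in_conv singletonI)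
    then have "x \<in> N y" using N_W' x by blast
    moreover have "y \<in> \<rho>" using W'(1) y(1) by blast
    ultimately show "x \<in> W" unfolding W_def by blast
  qed
  moreover have "W \<subseteq> W'" unfolding W_def using W'(3) by blast
  ultimately have "W = W'" by blast
  then show ?thesis using W' N_W' by blast
qed

lemma W_subset: "W \<subseteq> \<rho>" and card_W: "card W = Suc (Suc (v i))"
  and N_eq_W: "e \<in> W \<Longrightarrow> N e = W - {e}"
  using W_hull by blast+

lemma N_subset_W: "c \<in> \<rho> \<Longrightarrow> N c \<subseteq> W"
  unfolding W_def by blast

lemma two_in_W: obtains e e' where "e \<in> W" "e' \<in> W" "e \<noteq> e'"
proof -
  have "card W \<noteq> 0" using card_W by simp
  then obtain e where e: "e \<in> W" by fastforce
  then have "card (W - {e}) \<noteq> 0" using card_W by (simp add: card_Diff_singleton)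
  then have "W - {e} \<noteq> {}" by (metis card.empty)
  then obtain e' where "e' \<in> W - {e}" by blast
  then show thesis using that e by blast
qed

text \<open>For distinct \<open>e, e'\<close> in \<open>W\<close> both sides equal \<open>M (\<rho> - {e, e'})\<close> plus the edges \<open>(e, i)\<close>
  and \<open>(e', i)\<close>.\<close>
lemma insert_amalgamation_eq:
  assumes "e \<in> W" "e' \<in> W"
  shows "insert (e, i) (A (\<rho> - {e})) = insert (e', i) (A (\<rho> - {e'}))"
proof (cases "e = e'")
  case False
  have "e' \<in> N e" "e \<in> N e'" using N_eq_W assms False by auto
  then show ?thesis
    using amalgamation_eq_insert_pair[of e e'] amalgamation_eq_insert_pair[of e' e] assms W_subset
    by (auto simp: insert_commute)
qed simp

lemma H_eq: "e \<in> W \<Longrightarrow> H = insert (e, i) (A (\<rho> - {e}))"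
  unfolding H_def using insert_amalgamation_eq by blast

lemma H_tope: "is_tope n d (v(i := v i + 2)) \<rho> H"
proof -
  obtain e where e: "e \<in> W" using two_in_W by metis
  then have "e \<in> \<rho>" using W_subset by blast
  have "is_tope n d ((v(i := v i + 1))(i := v i + 1 + 1)) (insert e (\<rho> - {e})) (insert (e, i) (A (\<rho> - {e})))"
    using is_tope_insert[OF amalgamation_tope[OF \<rho>_minus[OF \<open>e \<in> \<rho>\<close>]] \<rho>_minus(1)[OF \<open>e \<in> \<rho>\<close>], of e i]
      \<open>e \<in> \<rho>\<close> \<rho>(1) i_lt_d by auto
  then show ?thesis using H_eq[OF e] \<open>e \<in> \<rho>\<close> by (simp add: insert_absorb)
qed

lemma left_nbrs_H: "{l. (l, i) \<in> H} = W"
proof -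
  obtain e where e: "e \<in> W" using two_in_W by metis
  have "{l. (l, i) \<in> H} = insert e (N e)" unfolding H_eq[OF e] N_def by auto
  then show ?thesis using N_eq_W[OF e] e by auto
qed

lemma H_subset_D: "H \<subseteq> D"
proof -
  obtain e e' where e: "e \<in> W" "e' \<in> W" "e \<noteq> e'" using two_in_W by metis
  then have "e \<in> N e'" using N_eq_W by blast
  then have "(e, i) \<in> A (\<rho> - {e'})" unfolding N_def by simp
  moreover have "e \<in> \<rho>" "e' \<in> \<rho>" using e W_subset by auto
  ultimately show ?thesis unfolding H_eq[OF e(1)] D_def by blast
qed

lemma D_subset: "D \<subseteq> \<rho> \<times> {0..<d}"
proof
  fix x assume "x \<in> D"
  then obtain c where c: "c \<in> \<rho>" "x \<in> A (\<rho> - {c})" unfolding D_def by blast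
  then have "x \<in> C (\<rho> - {c})" using amalgamation_subset_C[OF \<rho>_minus[OF c(1)]] by blast
  then show "x \<in> \<rho> \<times> {0..<d}" using C_edge[OF \<rho>_minus[OF c(1)]] by (cases x) auto
qed

lemma finite_D: "finite D"
  by (rule finite_subset[OF D_subset]) (simp add: finite_\<rho>)

lemma amalgamation_subset_insert_C:
  assumes "c \<in> \<rho>" "e \<in> N c"
  shows "A (\<rho> - {c}) \<subseteq> insert (e, i) (C (\<rho> - {e}))"
proof -
  have "e \<in> \<rho>" "c \<noteq> e" using N_subset[OF assms(1)] assms(2) by auto
  then show ?thesis
    using amalgamation_eq_insert_pair[OF assms] M_pair_subset_C[OF assms(1)] by blast
qed

lemma D_i_edge_in_H: "(l, i) \<in> D \<Longrightarrow> (l, i) \<in> H"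
  using left_nbrs_H N_subset_W unfolding D_def N_def by blast

lemma exists_common_N:
  assumes "c \<in> \<rho>" "c' \<in> \<rho>"
  obtains e where "e \<in> N c" "e \<in> N c'"
proof -
  have "card (N c \<inter> N c') \<noteq> 0"
  proof (cases "c = c'")
    case True
    then show ?thesis using card_N[OF assms(1)] by simp
  next
    case False
    then show ?thesis using card_N_Int[OF assms False] v_pos[OF i_lt_d] by linarith
  qed
  then have "N c \<inter> N c' \<noteq> {}" by (metis card.empty)
  then show thesis using that by blast
qed

text \<open>Two edges of \<open>D - H\<close> at the same right node \<open>j\<close> would both lie in the tree \<open>C (\<rho> - {e})\<close>
  for a common neighbour \<open>e\<close>, together with the \<open>v j\<close> edges of \<open>H\<close> at \<open>j\<close>; but \<open>j\<close> has at most
  \<open>v j + 1\<close> neighbours there.\<close>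
lemma D_minus_H_column_unique:
  assumes l: "(l, j) \<in> D - H" and l': "(l', j) \<in> D - H"
  shows "l = l'"
proof (rule ccontr)
  assume "l \<noteq> l'"
  obtain c c' where c: "c \<in> \<rho>" "(l, j) \<in> A (\<rho> - {c})" and c': "c' \<in> \<rho>" "(l', j) \<in> A (\<rho> - {c'})"
    using l l' unfolding D_def by blast
  have "j \<noteq> i" using D_i_edge_in_H l by blast
  have "(l, j) \<in> \<rho> \<times> {0..<d}" using D_subset l by blast
  then have "j < d" by simp
  obtain e where e: "e \<in> N c" "e \<in> N c'" using exists_common_N[OF c(1) c'(1)] .
  then have "e \<in> W" "e \<in> \<rho>" using N_subset_W[OF c(1)] W_subset by blast+
  let ?Ce = "{m. (m, j) \<in> C (\<rho> - {e})}"
  have "(l, j) \<in> C (\<rho> - {e})" "(l', j) \<in> C (\<rho> - {e})"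
    using amalgamation_subset_insert_C[OF c(1) e(1)] amalgamation_subset_insert_C[OF c'(1) e(2)]
      c(2) c'(2) \<open>j \<noteq> i\<close> by blast+
  moreover have "{m. (m, j) \<in> H} \<subseteq> ?Ce"
    using H_eq[OF \<open>e \<in> W\<close>] amalgamation_subset_C[OF \<rho>_minus[OF \<open>e \<in> \<rho>\<close>]] \<open>j \<noteq> i\<close> by blast
  ultimately have sub: "insert l (insert l' {m. (m, j) \<in> H}) \<subseteq> ?Ce" by blast
  have "card {m. (m, j) \<in> H} = v j"
    using rdeg_tope[OF H_tope] \<open>j < d\<close> \<open>j \<noteq> i\<close> unfolding rdeg_def by simp
  then have "card (insert l (insert l' {m. (m, j) \<in> H})) = Suc (Suc (v j))"
    using l l' \<open>l \<noteq> l'\<close> finite_left_nbrs[OF is_tope_finite[OF H_tope]] by simp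
  moreover have "card ?Ce \<le> Suc (v j)"
    using rdeg_C_le[OF \<rho>_minus[OF \<open>e \<in> \<rho>\<close>] \<open>j < d\<close>] unfolding rdeg_def .
  moreover have "finite ?Ce"
    using finite_left_nbrs[OF finite_C[OF \<rho>_minus[OF \<open>e \<in> \<rho>\<close>]]] .
  ultimately show False using card_mono[OF _ sub] by simp
qed

lemma card_D_less: "card D < card \<rho> + d"
proof -
  have "inj_on snd (D - H)"
  proof (rule inj_onI)
    fix x y assume xy: "x \<in> D - H" "y \<in> D - H" "snd x = snd y"
    obtain l j l' j' where "x = (l, j)" "y = (l', j')" by fastforce
    then show "x = y" using xy D_minus_H_column_unique[of l j l'] by simp
  qed
  moreover have "snd ` (D - H) \<subseteq> {0..<d} - {i}"
  proof
    fix j assume "j \<in> snd ` (D - H)"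
    then obtain l where "(l, j) \<in> D - H" by (auto simp: image_iff)
    then show "j \<in> {0..<d} - {i}" using D_subset D_i_edge_in_H by blast
  qed
  ultimately have "card (D - H) \<le> card ({0..<d} - {i})"
    using card_inj_on_le by blast
  also have "\<dots> < d" using i_lt_d by simp
  finally have "card (D - H) < d" .
  moreover have "card H = card \<rho>"
  proof -
    have "Domain H = \<rho>" "single_valued H" using H_tope is_tope_iff[OF \<rho>(1)] by blast+
    then show ?thesis using card_single_valued[of H] by simp
  qed
  moreover have "card D = card H + card (D - H)"
    using card_Diff_subset[OF is_tope_finite[OF H_tope] H_subset_D] card_mono[OF finite_D H_subset_D]
    by simp
  ultimately show ?thesis by simp
qed

text \<open>The symmetric difference of \<open>A (\<rho> - {c})\<close> and \<open>H\<close> has odd degree only at \<open>Inl c\<close>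
  and \<open>Inr i\<close>, so these lie in one component.\<close>
lemma reaches_i:
  assumes "c \<in> \<rho>"
  shows "(Inl c, Inr i) \<in> {(a, b). badj D a b}\<^sup>*"
proof -
  let ?G = "A (\<rho> - {c})"
  have G: "is_tope n d (v(i := v i + 1)) (\<rho> - {c}) ?G" using amalgamation_tope[OF \<rho>_minus[OF assms]] .
  have fin: "finite ?G" "finite H" using is_tope_finite G H_tope by blast+
  have ldeg: "ldeg ?G l = (if l \<in> \<rho> - {c} then 1 else 0)" "ldeg H l = (if l \<in> \<rho> then 1 else 0)" for l
    using ldeg_tope[OF G \<rho>_minus(1)[OF assms]] ldeg_tope[OF H_tope \<rho>(1)] by blast+
  have rdeg: "rdeg ?G r = rdeg H r" if "r \<noteq> i" for r
    using rdeg_tope[OF G] rdeg_tope[OF H_tope] that by simp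
  have "(Inl c, Inr i) \<in> {(a, b). badj (sym_diff ?G H) a b}\<^sup>*"
  proof (rule odd_ldeg_reaches_odd_rdeg)
    show "finite (sym_diff ?G H)" using fin by simp
    show "odd (ldeg (sym_diff ?G H) c)" using even_ldeg_sym_diff[OF fin] ldeg assms by simp
    show "even (ldeg (sym_diff ?G H) l)" if "l \<noteq> c" for l
      using even_ldeg_sym_diff[OF fin] ldeg that by simp
    show "even (rdeg (sym_diff ?G H) r)" if "r \<noteq> i" for r
      using even_rdeg_sym_diff[OF fin] rdeg[OF that] by simp
  qed
  moreover have "sym_diff ?G H \<subseteq> D" using H_subset_D assms unfolding D_def by blast
  then have "{(a, b). badj (sym_diff ?G H) a b} \<subseteq> {(a, b). badj D a b}" using badj_mono by blast
  ultimately show ?thesis using rtrancl_mono by blast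
qed

lemma connected_D: "connected_on (badj D) (Inl ` \<rho> \<union> Inr ` {0..<d})"
proof -
  have reach: "(x, Inr i) \<in> {(a, b). badj D a b}\<^sup>*" if x: "x \<in> Inl ` \<rho> \<union> Inr ` {0..<d}" for x
  proof -
    consider (L) c where "x = Inl c" "c \<in> \<rho>" | (R) j where "x = Inr j" "j < d" using x by auto
    then show ?thesis
    proof cases
      case L
      then show ?thesis using reaches_i by simp
    next
      case R
      have "rdeg H j \<noteq> 0"
        using rdeg_tope[OF H_tope] v_pos[OF R(2)] R(2) by simp
      then have "{l. (l, j) \<in> H} \<noteq> {}" unfolding rdeg_def by (metis card.empty)
      then obtain l where l: "(l, j) \<in> H" by blast
      have "Domain H = \<rho>" using H_tope is_tope_iff[OF \<rho>(1)] by blast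
      then have "l \<in> \<rho>" using l by blast
      moreover have "(Inr j, Inl l) \<in> {(a, b). badj D a b}" using l H_subset_D by auto
      ultimately show ?thesis
        using converse_rtrancl_into_rtrancl[OF _ reaches_i] R(1) by simp
    qed
  qed
  show ?thesis
    unfolding connected_on_def
  proof (intro ballI)
    fix x y assume "x \<in> Inl ` \<rho> \<union> Inr ` {0..<d}" "y \<in> Inl ` \<rho> \<union> Inr ` {0..<d}"
    then show "(x, y) \<in> {(a, b). badj D a b}\<^sup>*"
      using rtrancl_trans[OF reach rtrancl_badj_sym[OF reach]] by blast
  qed
qed

lemma tree_D: "is_tree_on (Inl ` \<rho> \<union> Inr ` {0..<d}) D"
proof (rule is_tree_onI_card)
  show "finite (Inl ` \<rho> \<union> Inr ` {0..<d})" using finite_\<rho> by simp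
  show "Inl ` \<rho> \<union> Inr ` {0..<d} \<noteq> {}" using i_lt_d by auto
  show "\<forall>(l, r)\<in>D. Inl l \<in> Inl ` \<rho> \<union> Inr ` {0..<d} \<and> Inr r \<in> Inl ` \<rho> \<union> Inr ` {0..<d}"
  proof (intro ballI, clarify)
    fix l r assume "(l, r) \<in> D"
    then have "l \<in> \<rho>" "r \<in> {0..<d}" using D_subset by auto
    then show "Inl l \<in> Inl ` \<rho> \<union> Inr ` {0..<d} \<and> Inr r \<in> Inl ` \<rho> \<union> Inr ` {0..<d}" by blast
  qed
  have "card (Inl ` \<rho> \<union> Inr ` {0..<d}) =
      card (Inl ` \<rho> :: (nat + nat) set) + card (Inr ` {0..<d} :: (nat + nat) set)"
    using finite_\<rho> by (intro card_Un_disjoint) auto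
  also have "\<dots> = card \<rho> + d" by (simp add: card_image)
  finally show "card D < card (Inl ` \<rho> \<union> Inr ` {0..<d})" using card_D_less by simp
  show "finite D" by (rule finite_D)
  show "connected_on (badj D) (Inl ` \<rho> \<union> Inr ` {0..<d})" by (rule connected_D)
qed

lemma linkage_covector_amalgamation: "linkage_covector n d (v(i := v i + 1)) A \<rho> = D"
  unfolding D_def using linkage_covector_eq_UN[OF finite_\<rho>] \<rho> thickness_fun_upd_Suc[OF i_lt_d]
  by simp

end

context linkage_amalgamation
begin

theorem linkage_tope_field_amalgamation:
  assumes "k < n"
  shows "linkage_tope_field n d (v(i := v i + 1)) A"
  unfolding linkage_tope_field_def tope_field_def thickness_fun_upd_Suc[OF i_lt_d]
proof (intro conjI allI impI)
  show "valid_type n d (v(i := v i + 1))"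
    using v_pos thickness_fun_upd_Suc[OF i_lt_d] assms unfolding valid_type_def thickness_def by auto
  show "is_tope n d (v(i := v i + 1)) \<sigma> (A \<sigma>)" if "\<sigma> \<subseteq> {0..<n} \<and> card \<sigma> = Suc k" for \<sigma>
    using amalgamation_tope that by blast
  fix \<rho> assume \<rho>: "\<rho> \<subseteq> {0..<n} \<and> card \<rho> = Suc k + 1"
  interpret amalgamation_covector n d v M i \<rho>
    by unfold_locales (use \<rho> in auto)
  show "is_tree_on (Inl ` \<rho> \<union> Inr ` {0..<d}) (linkage_covector n d (v(i := v i + 1)) A \<rho>)"
    unfolding linkage_covector_amalgamation by (rule tree_D)
qed

end

theorem proposition3p15:
  fixes n d i :: nat and v :: "nat \<Rightarrow> nat" and M :: "nat set \<Rightarrow> (nat \<times> nat) set"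
  assumes "linkage_tope_field n d v M"
    and "thickness d v < n"
    and "i < d"
  shows "linkage_tope_field n d (v(i := v i + 1)) (amalgamation n d v M i)"
proof -
  interpret linkage_amalgamation n d v M i
    by unfold_locales (use assms in auto)
  show ?thesis using linkage_tope_field_amalgamation assms(2) .
qed

end
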